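(* Let $\boldsymbol{H}\in\mathbb{F}_q^{r\times m}$, $k\in\{2,\dots,r\}$, $i\in L\subseteq[m]$, and regard all entries of $\boldsymbol{H}_{[k]}^{L}$ as fixed except $h_{k,i}$. Assume $L\setminus\{i\}$ is a basis set of $\boldsymbol{H}_{[k-1]}$ and $L$ is a dependent set of $\boldsymbol{H}_{[k-1]}$. Then $|Z_{k,i}^{L}|=1$, and if $h_{k,i}\in\mathbb{F}_q\setminus Z_{k,i}^{L}$, then $L$ is a basis set of $\boldsymbol{H}_{[k]}$.
   Context: $\boldsymbol{H}_{[k]}$ denotes the first $k$ rows and $\boldsymbol{H}_{[k]}^{L}$ its columns in $L$. For a matrix with columns indexed by $[m]$: $S\subseteq[m]$ is independent if its columns are linearly independent, dependent otherwise; a basis set is a maximal independent set (an independent $S$ with $|S|$ equal to the rank of the matrix); a circuit is a dependent set all of whose proper subsets are independent. Veto set: for a circuit $C$ of $\boldsymbol{H}_{[k-1]}$ with $i\in C\subseteq L$, the column of $\boldsymbol{H}_{[k-1]}$ indexed by $i$ equals a unique combination $\sum_{j\in C\setminus\{i\}} f_j\cdot(\text{column }j)$, and its veto value is $c(C)=\sum_{j\in C\setminus\{i\}}f_j h_{k,j}$ (the unique value of $h_{k,i}$ making the columns $C$ of $\boldsymbol{H}_{[k]}$ dependent). $Z_{k,i}^{L}=\{c(L'\cup\{i\}): L'\subseteq L\setminus\{i\},\ L'\cup\{i\}\text{ a circuit of }\boldsymbol{H}_{[k-1]}\}$. *)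

theory Defs
  imports Main
begin

text \<open>A matrix H in F_q^{r x m} is represented as a function H :: nat => nat => 'a,
  with H t j the entry in row t (1 <= t <= r) and column j (1 <= j <= m);
  the field F_q is a finite field type 'a :: {field, finite}.
  H_[k] consists of rows 1..k.\<close>

definition cols_lin_indep :: "(nat \<Rightarrow> nat \<Rightarrow> 'a::field) \<Rightarrow> nat \<Rightarrow> nat set \<Rightarrow> bool" where
  "cols_lin_indep H k S \<longleftrightarrow>
     (\<forall>f. (\<forall>t\<in>{1..k}. (\<Sum>j\<in>S. f j * H t j) = 0) \<longrightarrow> (\<forall>j\<in>S. f j = 0))"

definition indep_set :: "(nat \<Rightarrow> nat \<Rightarrow> 'a::field) \<Rightarrow> nat \<Rightarrow> nat \<Rightarrow> nat set \<Rightarrow> bool" where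
  "indep_set H k m S \<longleftrightarrow> S \<subseteq> {1..m} \<and> cols_lin_indep H k S"

definition dep_set :: "(nat \<Rightarrow> nat \<Rightarrow> 'a::field) \<Rightarrow> nat \<Rightarrow> nat \<Rightarrow> nat set \<Rightarrow> bool" where
  "dep_set H k m S \<longleftrightarrow> S \<subseteq> {1..m} \<and> \<not> cols_lin_indep H k S"

definition basis_set :: "(nat \<Rightarrow> nat \<Rightarrow> 'a::field) \<Rightarrow> nat \<Rightarrow> nat \<Rightarrow> nat set \<Rightarrow> bool" where
  "basis_set H k m S \<longleftrightarrow> indep_set H k m S \<and>
     (\<forall>T. S \<subset> T \<and> T \<subseteq> {1..m} \<longrightarrow> \<not> indep_set H k m T)"

definition circuit :: "(nat \<Rightarrow> nat \<Rightarrow> 'a::field) \<Rightarrow> nat \<Rightarrow> nat \<Rightarrow> nat set \<Rightarrow> bool" where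
  "circuit H k m C \<longleftrightarrow> dep_set H k m C \<and> (\<forall>D. D \<subset> C \<longrightarrow> indep_set H k m D)"

text \<open>Veto value c(C) for a circuit C of H_[k-1] containing i: writing column i of
  H_[k-1] as the (unique) combination sum_{j in C-{i}} f_j (column j), it is
  sum_{j in C-{i}} f_j h_{k,j}.\<close>
definition veto :: "(nat \<Rightarrow> nat \<Rightarrow> 'a::field) \<Rightarrow> nat \<Rightarrow> nat \<Rightarrow> nat set \<Rightarrow> 'a" where
  "veto H k i C = (THE v. \<exists>f. (\<forall>t\<in>{1..k-1}. H t i = (\<Sum>j\<in>C-{i}. f j * H t j))
                              \<and> v = (\<Sum>j\<in>C-{i}. f j * H k j))"

definition veto_set :: "(nat \<Rightarrow> nat \<Rightarrow> 'a::field) \<Rightarrow> nat \<Rightarrow> nat \<Rightarrow> nat \<Rightarrow> nat set \<Rightarrow> 'a set" where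
  "veto_set H m k i L = {veto H k i (L' \<union> {i}) | L'.
      L' \<subseteq> L - {i} \<and> circuit H (k-1) m (L' \<union> {i})}"

end

theory Submission
  imports Defs
begin

(* Column i of H_[k-1] has unique coordinates a with respect to the basis L - {i}.  A circuit of
   H_[k-1] inside L through i expresses column i in coordinates that, padded with zeros, are again a,
   so every veto value is v = sum_j a_j h_{k,j}, and a minimal dependent subset of L is such a
   circuit.  If h_{k,i} <> v, then column i minus sum_j a_j (column j) is a nonzero vector supported
   on row k: it keeps column i out of the span of L - {i} in H_[k], and any further column j, lying
   in that span in H_[k-1], is corrected in row k by a multiple of it, so L stays maximal. *)

definition in_col_span :: "(nat \<Rightarrow> nat \<Rightarrow> 'a::field) \<Rightarrow> nat \<Rightarrow> nat set \<Rightarrow> nat \<Rightarrow> bool" where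
  "in_col_span H n S i \<longleftrightarrow> (\<exists>f. \<forall>t\<in>{1..n}. H t i = (\<Sum>j\<in>S. f j * H t j))"

lemma in_col_spanI:
  assumes "\<And>t. t \<in> {1..n} \<Longrightarrow> H t i = (\<Sum>j\<in>S. f j * H t j)"
  shows "in_col_span H n S i"
  using assms unfolding in_col_span_def by blast

lemma cols_lin_indepD:
  assumes "cols_lin_indep H n S" "\<forall>t\<in>{1..n}. (\<Sum>j\<in>S. f j * H t j) = 0" "j \<in> S"
  shows "f j = 0"
  using assms unfolding cols_lin_indep_def by blast

lemma sum_extend_by_zero:
  fixes f x :: "'b \<Rightarrow> 'a::semiring_0"
  assumes "finite B" "A \<subseteq> B"
  shows "(\<Sum>j\<in>B. (if j \<in> A then f j else 0) * x j) = (\<Sum>j\<in>A. f j * x j)"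
  using assms by (intro sum.mono_neutral_cong_right) auto

lemma cols_lin_indep_finite:
  assumes "cols_lin_indep H n S"
  shows "finite S"
proof (rule ccontr)
  assume "infinite S"
  have "(\<forall>t\<in>{1..n}. (\<Sum>j\<in>S. 1 * H t j) = 0) \<longrightarrow> (\<forall>j\<in>S. (1::'a) = 0)"
    using spec[OF assms[unfolded cols_lin_indep_def], of "\<lambda>_. 1"] by simp
  with \<open>infinite S\<close> have "S = {}" by auto
  with \<open>infinite S\<close> show False by simp
qed

lemma cols_lin_indep_subset:
  assumes "cols_lin_indep H n S" "T \<subseteq> S"
  shows "cols_lin_indep H n T"
  unfolding cols_lin_indep_def
proof (intro allI impI ballI)
  fix f j assume rel: "\<forall>t\<in>{1..n}. (\<Sum>j\<in>T. f j * H t j) = 0" and "j \<in> T"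
  let ?g = "\<lambda>j. if j \<in> T then f j else 0"
  have "finite S" using assms(1) by (rule cols_lin_indep_finite)
  with rel assms(2) have "\<forall>t\<in>{1..n}. (\<Sum>j\<in>S. ?g j * H t j) = 0"
    by (simp only: sum_extend_by_zero)
  then have "?g j = 0"
    by (rule cols_lin_indepD[OF assms(1)]) (use \<open>j \<in> T\<close> assms(2) in blast)
  with \<open>j \<in> T\<close> show "f j = 0" by simp
qed

lemma cols_lin_indep_mono_rows:
  assumes "cols_lin_indep H n S" "n \<le> k"
  shows "cols_lin_indep H k S"
  using assms unfolding cols_lin_indep_def by auto

lemma cols_lin_indep_coeffs_unique:
  assumes "cols_lin_indep H n B" "j \<in> B"
    and "\<forall>t\<in>{1..n}. (\<Sum>j\<in>B. f j * H t j) = (\<Sum>j\<in>B. g j * H t j)"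
  shows "f j = g j"
proof -
  have "\<forall>t\<in>{1..n}. (\<Sum>j\<in>B. (f j - g j) * H t j) = 0"
    using assms(3) by (simp add: left_diff_distrib sum_subtractf)
  from cols_lin_indepD[OF assms(1) this assms(2)] show ?thesis by simp
qed

lemma in_col_span_of_relation:
  fixes H :: "nat \<Rightarrow> nat \<Rightarrow> 'a::field"
  assumes "finite B" "i \<notin> B"
    and "\<forall>t\<in>{1..n}. (\<Sum>j\<in>insert i B. f j * H t j) = 0" "f i \<noteq> 0"
  shows "in_col_span H n B i"
proof -
  have "H t i = (\<Sum>j\<in>B. (- f j / f i) * H t j)" if "t \<in> {1..n}" for t
  proof -
    have "f i * H t i = - (\<Sum>j\<in>B. f j * H t j)"
      using assms(1-3) that by (simp add: eq_neg_iff_add_eq_0)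
    then have "H t i = - (\<Sum>j\<in>B. f j * H t j) / f i"
      using assms(4) by (metis nonzero_mult_div_cancel_left)
    also have "\<dots> = (\<Sum>j\<in>B. (- f j / f i) * H t j)"
      by (simp add: sum_divide_distrib sum_negf)
    finally show ?thesis .
  qed
  then show ?thesis by (rule in_col_spanI)
qed

lemma cols_lin_indep_insert_iff:
  assumes "cols_lin_indep H n B" "i \<notin> B"
  shows "cols_lin_indep H n (insert i B) \<longleftrightarrow> \<not> in_col_span H n B i"
proof -
  have fin: "finite B" using assms(1) by (rule cols_lin_indep_finite)
  show ?thesis
  proof
    assume indep: "cols_lin_indep H n (insert i B)"
    show "\<not> in_col_span H n B i"
    proof
      assume "in_col_span H n B i"
      then obtain f where f: "\<forall>t\<in>{1..n}. H t i = (\<Sum>j\<in>B. f j * H t j)"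
        unfolding in_col_span_def by blast
      let ?g = "\<lambda>j. if j = i then 1 else - f j"
      have "\<forall>t\<in>{1..n}. (\<Sum>j\<in>insert i B. ?g j * H t j) = 0"
      proof
        fix t assume "t \<in> {1..n}"
        have "(\<Sum>j\<in>B. ?g j * H t j) = (\<Sum>j\<in>B. - (f j * H t j))"
          using assms(2) by (intro sum.cong) auto
        also have "\<dots> = - (\<Sum>j\<in>B. f j * H t j)" by (rule sum_negf)
        finally show "(\<Sum>j\<in>insert i B. ?g j * H t j) = 0"
          using fin assms(2) f \<open>t \<in> {1..n}\<close> by simp
      qed
      from cols_lin_indepD[OF indep this, of i] show False by simp
    qed
  next
    assume span: "\<not> in_col_span H n B i"
    show "cols_lin_indep H n (insert i B)"
      unfolding cols_lin_indep_def
    proof (intro allI impI)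
      fix f assume rel: "\<forall>t\<in>{1..n}. (\<Sum>j\<in>insert i B. f j * H t j) = 0"
      then have "f i = 0" using in_col_span_of_relation[OF fin assms(2)] span by blast
      with rel fin assms(2) have "\<forall>t\<in>{1..n}. (\<Sum>j\<in>B. f j * H t j) = 0" by simp
      with assms(1) have "\<forall>j\<in>B. f j = 0" using cols_lin_indepD by blast
      with \<open>f i = 0\<close> show "\<forall>j\<in>insert i B. f j = 0" by simp
    qed
  qed
qed

lemma dependent_contains_circuit:
  assumes "S \<subseteq> {1..m}" "\<not> cols_lin_indep H n S"
  shows "\<exists>C\<subseteq>S. circuit H n m C"
proof -
  let ?deps = "{C. C \<subseteq> S \<and> \<not> cols_lin_indep H n C}"
  have "finite ?deps"
    using finite_subset[OF assms(1)] by (auto intro: finite_subset[of _ "Pow S"])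
  moreover have "S \<in> ?deps" using assms(2) by simp
  ultimately obtain C where C: "C \<in> ?deps" and min: "\<forall>D\<in>?deps. D \<subseteq> C \<longrightarrow> C = D"
    using finite_has_minimal[of ?deps] by blast
  have "circuit H n m C"
    unfolding circuit_def dep_set_def indep_set_def
    using C min assms(1) by blast
  with C show ?thesis by blast
qed

lemma veto_eqI:
  assumes "i \<notin> S" "cols_lin_indep H n S"
    and rep: "\<forall>t\<in>{1..n}. H t i = (\<Sum>j\<in>S. f j * H t j)"
  shows "veto H (Suc n) i (insert i S) = (\<Sum>j\<in>S. f j * H (Suc n) j)"
proof -
  have S: "insert i S - {i} = S" using assms(1) by simp
  show ?thesis
    unfolding veto_def S diff_Suc_1
  proof (rule the_equality)
    fix v assume "\<exists>g. (\<forall>t\<in>{1..n}. H t i = (\<Sum>j\<in>S. g j * H t j)) \<and> v = (\<Sum>j\<in>S. g j * H (Suc n) j)"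
    then obtain g where g: "\<forall>t\<in>{1..n}. H t i = (\<Sum>j\<in>S. g j * H t j)"
      and v: "v = (\<Sum>j\<in>S. g j * H (Suc n) j)" by blast
    from g rep have "\<forall>t\<in>{1..n}. (\<Sum>j\<in>S. g j * H t j) = (\<Sum>j\<in>S. f j * H t j)" by simp
    then have "\<forall>j\<in>S. g j = f j" using cols_lin_indep_coeffs_unique[OF assms(2)] by blast
    with v show "v = (\<Sum>j\<in>S. f j * H (Suc n) j)" by simp
  qed (use rep in blast)
qed

lemma veto_insert_subset_eq:
  assumes "cols_lin_indep H n B" "i \<notin> B" "S \<subseteq> B" "in_col_span H n S i"
  shows "veto H (Suc n) i (insert i S) = veto H (Suc n) i (insert i B)"
proof -
  obtain f where f: "\<forall>t\<in>{1..n}. H t i = (\<Sum>j\<in>S. f j * H t j)"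
    using assms(4) unfolding in_col_span_def by blast
  have "finite B" using assms(1) by (rule cols_lin_indep_finite)
  then have pad: "\<And>x. (\<Sum>j\<in>B. (if j \<in> S then f j else 0) * x j) = (\<Sum>j\<in>S. f j * x j)"
    using assms(3) by (rule sum_extend_by_zero)
  have "i \<notin> S" using assms(2,3) by blast
  then have "veto H (Suc n) i (insert i S) = (\<Sum>j\<in>S. f j * H (Suc n) j)"
    using veto_eqI cols_lin_indep_subset[OF assms(1,3)] f by blast
  also have "\<dots> = veto H (Suc n) i (insert i B)"
    using veto_eqI[OF assms(2,1), of "\<lambda>j. if j \<in> S then f j else 0"] f by (simp add: pad)
  finally show ?thesis .
qed

lemma veto_set_eq_singleton:
  assumes "i \<in> L" "L \<subseteq> {1..m}"
    and "cols_lin_indep H n (L - {i})" "\<not> cols_lin_indep H n L"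
  shows "veto_set H m (Suc n) i L = {veto H (Suc n) i L}"
proof -
  define B where "B = L - {i}"
  have L: "L = insert i B" "i \<notin> B" using assms(1) B_def by auto
  have B: "cols_lin_indep H n B" using assms(3) B_def by simp
  let ?circuits = "{S. S \<subseteq> B \<and> circuit H n m (insert i S)}"
  have circuit_veto: "veto H (Suc n) i (insert i S) = veto H (Suc n) i L" if "S \<in> ?circuits" for S
  proof -
    from that have S: "S \<subseteq> B" "circuit H n m (insert i S)" by simp_all
    have "i \<notin> S" "S \<subset> insert i S" using S(1) L(2) by auto
    with S(2) have "cols_lin_indep H n S" "\<not> cols_lin_indep H n (insert i S)"
      unfolding circuit_def dep_set_def indep_set_def by blast+
    with \<open>i \<notin> S\<close> have "in_col_span H n S i"
      using cols_lin_indep_insert_iff[of H n S i] by blast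
    with S(1) show ?thesis using veto_insert_subset_eq[OF B L(2)] L(1) by simp
  qed
  obtain C where C: "C \<subseteq> L" "circuit H n m C"
    using dependent_contains_circuit[OF assms(2,4)] by blast
  have "i \<in> C"
  proof (rule ccontr)
    assume "i \<notin> C"
    with C(1) L(1) have "C \<subseteq> B" by blast
    then have "cols_lin_indep H n C" by (rule cols_lin_indep_subset[OF B])
    with C(2) show False unfolding circuit_def dep_set_def by blast
  qed
  with C B_def have "C - {i} \<in> ?circuits" by (auto simp: insert_absorb)
  have "veto_set H m (Suc n) i L = (\<lambda>S. veto H (Suc n) i (insert i S)) ` ?circuits"
    unfolding veto_set_def B_def by (auto simp: image_def)
  also have "\<dots> = (\<lambda>S. veto H (Suc n) i L) ` ?circuits"
    using circuit_veto by (rule image_cong[OF refl])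
  also have "\<dots> = {veto H (Suc n) i L}"
    using \<open>C - {i} \<in> ?circuits\<close> by (rule image_constant)
  finally show ?thesis .
qed

lemma in_col_span_Suc_insert:
  assumes "finite B" "i \<notin> B"
    and a: "\<forall>t\<in>{1..n}. H t i = (\<Sum>l\<in>B. a l * H t l)"
    and "H (Suc n) i \<noteq> (\<Sum>l\<in>B. a l * H (Suc n) l)"
    and "in_col_span H n B j"
  shows "in_col_span H (Suc n) (insert i B) j"
proof -
  obtain b where b: "\<forall>t\<in>{1..n}. H t j = (\<Sum>l\<in>B. b l * H t l)"
    using assms(5) unfolding in_col_span_def by blast
  define \<alpha> where "\<alpha> t = H t i - (\<Sum>l\<in>B. a l * H t l)" for t
  define \<beta> where "\<beta> t = H t j - (\<Sum>l\<in>B. b l * H t l)" for t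
  define c where "c = \<beta> (Suc n) / \<alpha> (Suc n)"
  have \<beta>: "\<beta> t = c * \<alpha> t" if "t \<in> {1..Suc n}" for t
  proof (cases "t = Suc n")
    case True
    with assms(4) show ?thesis by (simp add: c_def \<alpha>_def)
  next
    case False
    with that a b show ?thesis by (simp add: \<alpha>_def \<beta>_def)
  qed
  have "H t j = (\<Sum>l\<in>insert i B. (if l = i then c else b l - c * a l) * H t l)"
    if "t \<in> {1..Suc n}" for t
  proof -
    have "(\<Sum>l\<in>B. (if l = i then c else b l - c * a l) * H t l) = (\<Sum>l\<in>B. (b l - c * a l) * H t l)"
      using assms(2) by (intro sum.cong) auto
    then have "(\<Sum>l\<in>insert i B. (if l = i then c else b l - c * a l) * H t l)
        = c * H t i + (\<Sum>l\<in>B. (b l - c * a l) * H t l)"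
      using assms(1,2) by simp
    also have "\<dots> = c * \<alpha> t + (\<Sum>l\<in>B. b l * H t l)"
      by (simp add: \<alpha>_def left_diff_distrib sum_subtractf sum_distrib_left algebra_simps)
    also have "\<dots> = H t j"
      using \<beta>[OF that] by (simp add: \<beta>_def diff_eq_eq)
    finally show ?thesis by simp
  qed
  then show ?thesis by (rule in_col_spanI)
qed

lemma basis_set_Suc_if_not_veto:
  assumes "i \<in> L" "L \<subseteq> {1..m}"
    and basis: "basis_set H n m (L - {i})" and "\<not> cols_lin_indep H n L"
    and "H (Suc n) i \<noteq> veto H (Suc n) i L"
  shows "basis_set H (Suc n) m L"
proof -
  define B where "B = L - {i}"
  have L: "L = insert i B" "i \<notin> B" using assms(1) B_def by auto
  have B: "cols_lin_indep H n B" using basis B_def unfolding basis_set_def indep_set_def by blast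
  have fin: "finite B" using B by (rule cols_lin_indep_finite)
  obtain a where a: "\<forall>t\<in>{1..n}. H t i = (\<Sum>l\<in>B. a l * H t l)"
    using cols_lin_indep_insert_iff[OF B L(2)] assms(4) L(1) unfolding in_col_span_def by blast
  have veto: "veto H (Suc n) i L = (\<Sum>l\<in>B. a l * H (Suc n) l)"
    unfolding L(1) by (rule veto_eqI[OF L(2) B a])
  have "\<not> in_col_span H (Suc n) B i"
  proof
    assume "in_col_span H (Suc n) B i"
    then obtain g where g: "\<forall>t\<in>{1..Suc n}. H t i = (\<Sum>l\<in>B. g l * H t l)"
      unfolding in_col_span_def by blast
    then have "veto H (Suc n) i L = (\<Sum>l\<in>B. g l * H (Suc n) l)"
      unfolding L(1) using veto_eqI[OF L(2) B, of g] by simp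
    with g assms(5) show False by simp
  qed
  moreover have "cols_lin_indep H (Suc n) B" using B by (rule cols_lin_indep_mono_rows) simp
  ultimately have indep: "cols_lin_indep H (Suc n) L"
    using cols_lin_indep_insert_iff L by blast
  have "\<not> indep_set H (Suc n) m T" if T: "L \<subset> T" "T \<subseteq> {1..m}" for T
  proof -
    obtain j where j: "j \<in> T" "j \<notin> L" using T(1) by blast
    with T L have "B \<subset> insert j B" "insert j B \<subseteq> {1..m}" by auto
    with basis have "\<not> cols_lin_indep H n (insert j B)"
      unfolding B_def basis_set_def indep_set_def by blast
    with j(2) L have "in_col_span H n B j" using cols_lin_indep_insert_iff[OF B] by blast
    then have "in_col_span H (Suc n) L j"
      using in_col_span_Suc_insert[OF fin L(2) a] assms(5) veto L(1) by simp
    then have "\<not> cols_lin_indep H (Suc n) (insert j L)"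
      using cols_lin_indep_insert_iff[OF indep j(2)] by blast
    with j T(1) show ?thesis
      using cols_lin_indep_subset[of H "Suc n" T "insert j L"] unfolding indep_set_def by blast
  qed
  with indep assms(2) show ?thesis unfolding basis_set_def indep_set_def by blast
qed

theorem proposition4:
  fixes H :: "nat \<Rightarrow> nat \<Rightarrow> 'a::{field,finite}"
    and r m k i :: nat and L :: "nat set"
  assumes "2 \<le> k" and "k \<le> r"
    and "i \<in> L" and "L \<subseteq> {1..m}"
    and "basis_set H (k-1) m (L - {i})"
    and "dep_set H (k-1) m L"
  shows "card (veto_set H m k i L) = 1 \<and>
         (H k i \<notin> veto_set H m k i L \<longrightarrow> basis_set H k m L)"
proof -
  obtain n where k: "k = Suc n" using assms(1) by (cases k) auto
  have "cols_lin_indep H n (L - {i})"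
    using assms(5) k unfolding basis_set_def indep_set_def by simp
  moreover have dep: "\<not> cols_lin_indep H n L"
    using assms(6) k unfolding dep_set_def by simp
  ultimately have veto_set: "veto_set H m k i L = {veto H k i L}"
    using veto_set_eq_singleton[OF assms(3,4)] k by simp
  have "basis_set H k m L" if "H k i \<notin> veto_set H m k i L"
    using basis_set_Suc_if_not_veto[OF assms(3,4) _ dep] assms(5) that veto_set k by simp
  with veto_set show ?thesis by simp
qed

end
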